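(* Let $\mathcal{K}^{\langle\infty\rangle}$ be an unbounded simple nested fractal with the good labelling property. Then for every $M\in\mathbb{Z}$ the good labelling function of order $M$ is unique up to a permutation of the alphabet $\mathcal{A}$: if $\ell_M,\ell_M'$ are good labelling functions of order $M$, then $\ell_M=\sigma\circ\ell'_M$ for some permutation $\sigma$ of $\mathcal{A}$. In particular, for every bijection $\widetilde{\ell}_M:V_M^{\langle M\rangle}\to\mathcal{A}$ there exists a unique good labelling function $\ell_M:V_M^{\langle\infty\rangle}\to\mathcal{A}$ of order $M$ with $\ell_M|_{V_M^{\langle M\rangle}}=\widetilde{\ell}_M$.
   Context: Setting: $L>1$, $N\ge2$, $\nu_1=0,\dots,\nu_N\in\mathbb{R}^2$, $\Psi_i(x)=x/L+\nu_i$, and $\mathcal{K}^{\langle 0\rangle}=\bigcup_i\Psi_i(\mathcal{K}^{\langle 0\rangle})$ is a planar simple nested fractal (i.e. with $V_0^{\langle0\rangle}$ the set of essential fixed points — fixed points $x$ for which there are another fixed point $y$ and $\Psi_i\ne\Psi_j$ with $\Psi_i(x)=\Psi_j(y)$ — the open set condition, nesting $\Psi_i(\mathcal{K}^{\langle 0\rangle})\cap\Psi_j(\mathcal{K}^{\langle 0\rangle})=\Psi_i(V_0^{\langle 0\rangle})\cap\Psi_j(V_0^{\langle 0\rangle})$ for $i\ne j$, the symmetry condition with respect to perpendicular bisectors of pairs of essential fixed points, and connectivity hold). Let $k=\#V_0^{\langle0\rangle}\ge 3$; then $V_0^{\langle0\rangle}$ is the vertex set of a regular $k$-gon. For $M\in\mathbb{Z}$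 put $\mathcal{K}^{\langle M\rangle}=L^M\mathcal{K}^{\langle 0\rangle}$ and $\mathcal{K}^{\langle\infty\rangle}=\bigcup_{M\ge0}\mathcal{K}^{\langle M\rangle}$. An $M$-complex is a set $\Delta_M=\mathcal{K}^{\langle M\rangle}+\nu_{\Delta_M}$ with $\nu_{\Delta_M}=\sum_{j=M+1}^{J}L^j\nu_{i_j}$ for some $J\ge M+1$, $i_j\in\{1,\dots,N\}$; its vertex set is $V(\Delta_M)=L^MV_0^{\langle0\rangle}+\nu_{\Delta_M}$. Let $V_M^{\langle M\rangle}=L^MV_0^{\langle0\rangle}$ and $V_M^{\langle\infty\rangle}$ the union of $V(\Delta_M)$ over all $M$-complexes. Let $\mathcal{A}$ be an alphabet of $k$ symbols and $\mathcal{R}_M$ the set of the $k$ rotations about the barycenter of $\mathcal{K}^{\langle M\rangle}$ mapping $V_M^{\langle M\rangle}$ onto itself. A good labelling function of order $M$ is a map $\ell_M:V_M^{\langle\infty\rangle}\to\mathcal{A}$ such that (1) $\ell_M|_{V_M^{\langle M\rangle}}$ is a bijection onto $\mathcal{A}$, and (2) for every $M$-complex $\Delta_M=\mathcal{K}^{\langle M\rangle}+\nu_{\Delta_M}$ there is $R_{\Delta_M}\in\mathcal{R}_M$ with $\ell_M(v)=\ell_M(R_{\Delta_M}(v-\nu_{\Delta_M}))$ for all $v\in V(\Delta_M)$. $\mathcal{K}^{\langle\infty\rangle}$ has the good labelling property (GLP) if a good labelling function of some order $M$ exists (equivalently, by self-similarity, of every order). *)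

theory Defs
  imports "HOL-Analysis.Analysis"
begin

text \<open>The plane R^2 is identified with the complex numbers. The similitudes are
  Psi_i(x) = x / L + nu_i, for i in {1..N}.\<close>

definition Psi :: "real \<Rightarrow> (nat \<Rightarrow> complex) \<Rightarrow> nat \<Rightarrow> complex \<Rightarrow> complex" where
  "Psi L \<nu> i x = x / of_real L + \<nu> i"

definition Psi_word :: "real \<Rightarrow> (nat \<Rightarrow> complex) \<Rightarrow> nat list \<Rightarrow> complex \<Rightarrow> complex" where
  "Psi_word L \<nu> ws = foldr (\<lambda>i f. Psi L \<nu> i \<circ> f) ws id"

definition fixed_points :: "real \<Rightarrow> nat \<Rightarrow> (nat \<Rightarrow> complex) \<Rightarrow> complex set" where
  "fixed_points L N \<nu> = {x. \<exists>i\<in>{1..N}. Psi L \<nu> i x = x}"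

definition V0 :: "real \<Rightarrow> nat \<Rightarrow> (nat \<Rightarrow> complex) \<Rightarrow> complex set" where
  "V0 L N \<nu> = {x \<in> fixed_points L N \<nu>. \<exists>y \<in> fixed_points L N \<nu>. \<exists>i\<in>{1..N}. \<exists>j\<in>{1..N}.
      Psi L \<nu> i \<noteq> Psi L \<nu> j \<and> Psi L \<nu> i x = Psi L \<nu> j y}"

definition Vn :: "real \<Rightarrow> nat \<Rightarrow> (nat \<Rightarrow> complex) \<Rightarrow> nat \<Rightarrow> complex set" where
  "Vn L N \<nu> n = (\<Union>ws \<in> {ws. length ws = n \<and> set ws \<subseteq> {1..N}}. Psi_word L \<nu> ws ` V0 L N \<nu>)"

definition refl_bisector :: "complex \<Rightarrow> complex \<Rightarrow> complex \<Rightarrow> complex" where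
  "refl_bisector x y z =
     z - of_real (2 * ((z - (x + y) / 2) \<bullet> (y - x)) / (norm (y - x))\<^sup>2) * (y - x)"

definition open_set_condition :: "real \<Rightarrow> nat \<Rightarrow> (nat \<Rightarrow> complex) \<Rightarrow> bool" where
  "open_set_condition L N \<nu> \<longleftrightarrow>
     (\<exists>U. open U \<and> bounded U \<and> U \<noteq> {} \<and> (\<forall>i\<in>{1..N}. Psi L \<nu> i ` U \<subseteq> U) \<and>
          (\<forall>i\<in>{1..N}. \<forall>j\<in>{1..N}. i \<noteq> j \<longrightarrow> Psi L \<nu> i ` U \<inter> Psi L \<nu> j ` U = {}))"

definition nesting_condition :: "real \<Rightarrow> nat \<Rightarrow> (nat \<Rightarrow> complex) \<Rightarrow> complex set \<Rightarrow> bool" where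
  "nesting_condition L N \<nu> K \<longleftrightarrow>
     (\<forall>i\<in>{1..N}. \<forall>j\<in>{1..N}. i \<noteq> j \<longrightarrow>
        Psi L \<nu> i ` K \<inter> Psi L \<nu> j ` K = Psi L \<nu> i ` V0 L N \<nu> \<inter> Psi L \<nu> j ` V0 L N \<nu>)"

definition symmetry_condition :: "real \<Rightarrow> nat \<Rightarrow> (nat \<Rightarrow> complex) \<Rightarrow> bool" where
  "symmetry_condition L N \<nu> \<longleftrightarrow>
     (\<forall>x\<in>V0 L N \<nu>. \<forall>y\<in>V0 L N \<nu>. x \<noteq> y \<longrightarrow>
        (\<forall>n. refl_bisector x y ` Vn L N \<nu> n \<subseteq> Vn L N \<nu> n))"

definition connectivity_condition :: "real \<Rightarrow> nat \<Rightarrow> (nat \<Rightarrow> complex) \<Rightarrow> bool" where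
  "connectivity_condition L N \<nu> \<longleftrightarrow>
     (\<forall>i\<in>{1..N}. \<forall>j\<in>{1..N}.
        (i, j) \<in> {(a, b). a \<in> {1..N} \<and> b \<in> {1..N} \<and>
                   Psi L \<nu> a ` V0 L N \<nu> \<inter> Psi L \<nu> b ` V0 L N \<nu> \<noteq> {}}\<^sup>*)"

definition planar_simple_nested_fractal ::
    "real \<Rightarrow> nat \<Rightarrow> (nat \<Rightarrow> complex) \<Rightarrow> complex set \<Rightarrow> bool" where
  "planar_simple_nested_fractal L N \<nu> K \<longleftrightarrow>
     L > 1 \<and> N \<ge> 2 \<and> \<nu> 1 = 0 \<and>
     compact K \<and> K \<noteq> {} \<and> K = (\<Union>i\<in>{1..N}. Psi L \<nu> i ` K) \<and>
     open_set_condition L N \<nu> \<and> nesting_condition L N \<nu> K \<and>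
     symmetry_condition L N \<nu> \<and> connectivity_condition L N \<nu> \<and>
     card (V0 L N \<nu>) \<ge> 3"

definition scaleL :: "real \<Rightarrow> int \<Rightarrow> complex set \<Rightarrow> complex set" where
  "scaleL L M S = (\<lambda>z. of_real (L powi M) * z) ` S"

definition complex_shifts :: "real \<Rightarrow> nat \<Rightarrow> (nat \<Rightarrow> complex) \<Rightarrow> int \<Rightarrow> complex set" where
  "complex_shifts L N \<nu> M =
     {(\<Sum>j\<in>{M+1..J}. of_real (L powi j) * \<nu> (ii j)) | J ii.
        J \<ge> M + 1 \<and> (\<forall>j\<in>{M+1..J}. ii j \<in> {1..N})}"

definition VMM :: "real \<Rightarrow> nat \<Rightarrow> (nat \<Rightarrow> complex) \<Rightarrow> int \<Rightarrow> complex set" where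
  "VMM L N \<nu> M = scaleL L M (V0 L N \<nu>)"

definition complex_vertices :: "real \<Rightarrow> nat \<Rightarrow> (nat \<Rightarrow> complex) \<Rightarrow> int \<Rightarrow> complex \<Rightarrow> complex set" where
  "complex_vertices L N \<nu> M s = (\<lambda>v. v + s) ` VMM L N \<nu> M"

definition VMinf :: "real \<Rightarrow> nat \<Rightarrow> (nat \<Rightarrow> complex) \<Rightarrow> int \<Rightarrow> complex set" where
  "VMinf L N \<nu> M = (\<Union>s \<in> complex_shifts L N \<nu> M. complex_vertices L N \<nu> M s)"

text \<open>Barycenter of K^<M>; by the symmetry of the nested fractal it is the centre of the
  regular polygon V_M^<M>, i.e. the centroid of its vertices.\<close>
definition barycenter :: "real \<Rightarrow> nat \<Rightarrow> (nat \<Rightarrow> complex) \<Rightarrow> int \<Rightarrow> complex" where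
  "barycenter L N \<nu> M = (\<Sum>v\<in>VMM L N \<nu> M. v) / of_nat (card (VMM L N \<nu> M))"

definition rotations :: "real \<Rightarrow> nat \<Rightarrow> (nat \<Rightarrow> complex) \<Rightarrow> int \<Rightarrow> (complex \<Rightarrow> complex) set" where
  "rotations L N \<nu> M =
     {R. \<exists>a. norm a = 1 \<and>
          R = (\<lambda>z. barycenter L N \<nu> M + a * (z - barycenter L N \<nu> M)) \<and>
          R ` VMM L N \<nu> M = VMM L N \<nu> M}"

text \<open>Good labelling function of order M with values in the alphabet A.
  (Only the values on V_M^<infinity> matter.)\<close>
definition good_labelling ::
    "real \<Rightarrow> nat \<Rightarrow> (nat \<Rightarrow> complex) \<Rightarrow> 'a set \<Rightarrow> int \<Rightarrow> (complex \<Rightarrow> 'a) \<Rightarrow> bool" where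
  "good_labelling L N \<nu> A M lab \<longleftrightarrow>
     lab ` VMinf L N \<nu> M \<subseteq> A \<and>
     bij_betw lab (VMM L N \<nu> M) A \<and>
     (\<forall>s\<in>complex_shifts L N \<nu> M. \<exists>R\<in>rotations L N \<nu> M.
        \<forall>v\<in>complex_vertices L N \<nu> M s. lab v = lab (R (v - s)))"

definition good_labelling_property ::
    "real \<Rightarrow> nat \<Rightarrow> (nat \<Rightarrow> complex) \<Rightarrow> 'a set \<Rightarrow> bool" where
  "good_labelling_property L N \<nu> A \<longleftrightarrow> (\<exists>M lab. good_labelling L N \<nu> A M lab)"

end

theory Submission
  imports Defs
begin

text \<open>A rotation about the barycenter is determined by the image of a single point other than
  the barycenter, and no vertex of V_M^<M> is the barycenter: by the symmetry condition the
  barycenter lies on the perpendicular bisector of any two vertices, which a vertex does not.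
  Hence two good labellings that agree on V_M^<M> and at one vertex of an M-complex agree on
  the whole complex. The M-complexes inside K^<M+d> form a connected graph under "sharing a
  vertex" (by induction on d, from the connectivity of the 1-cells), and K^<M> is one of them,
  so agreement on V_M^<M> propagates to all of V_M^<infinity>. Uniqueness up to a permutation
  of the alphabet follows by composing with the permutation that matches two good labellings
  on V_M^<M>; existence for every order M and every prescribed bijection on V_M^<M> follows
  by rescaling a given good labelling by a power of L and relabelling.\<close>

definition centroid :: "complex set \<Rightarrow> complex" where
  "centroid V = (\<Sum>v\<in>V. v) / of_nat (card V)"

lemma centroid_scale:
  assumes "c \<noteq> 0"
  shows "centroid ((\<lambda>z. c * z) ` V) = c * centroid V"
proof -
  have "inj_on (\<lambda>z. c * z) V" using assms by (auto simp: inj_on_def)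
  then show ?thesis
    by (simp add: centroid_def sum.reindex card_image sum_distrib_left)
qed

lemma refl_bisector_eq:
  "refl_bisector x y z = z - (2 * ((z - (x + y) / 2) \<bullet> (y - x)) / (norm (y - x))\<^sup>2) *\<^sub>R (y - x)"
  by (simp add: refl_bisector_def scaleR_conv_of_real)

lemma refl_bisector_involution:
  assumes "x \<noteq> y"
  shows "refl_bisector x y (refl_bisector x y z) = z"
proof -
  define d where "d = y - x"
  define t where "t = 2 * ((z - (x + y) / 2) \<bullet> d) / (norm d)\<^sup>2"
  have z': "refl_bisector x y z = z - t *\<^sub>R d"
    by (simp add: refl_bisector_eq d_def t_def)
  have "d \<bullet> d \<noteq> 0" using assms by (simp add: d_def)
  then have "(refl_bisector x y z - (x + y) / 2) \<bullet> d = - ((z - (x + y) / 2) \<bullet> d)"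
    unfolding z' t_def power2_norm_eq_inner
    by (simp add: inner_diff_left)
  then show ?thesis
    unfolding refl_bisector_eq d_def[symmetric] z' t_def by simp
qed

lemma centroid_notin_reflection_closed:
  assumes fin: "finite V" and card: "card V \<ge> 2"
    and closed: "\<And>x y. x \<in> V \<Longrightarrow> y \<in> V \<Longrightarrow> x \<noteq> y \<Longrightarrow> refl_bisector x y ` V \<subseteq> V"
  shows "centroid V \<notin> V"
proof
  define x where "x = centroid V"
  assume xV: "x \<in> V"
  have "card (V - {x}) \<ge> 1" using card xV fin by (simp add: card_Diff_singleton)
  then obtain y where yV: "y \<in> V" and yx: "y \<noteq> x"
    by (metis Diff_iff card.empty ex_in_conv insertI1 not_one_le_zero)
  define m where "m = (x + y) / 2"
  define d where "d = y - x"
  have "d \<noteq> 0" using yx by (simp add: d_def)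
  \<comment> \<open>the reflection in the bisector of x and y permutes V, so the centroid x lies on that bisector\<close>
  have "inj_on (refl_bisector x y) V"
    by (rule inj_on_inverseI[where g = "refl_bisector x y"])
      (simp add: refl_bisector_involution yx[symmetric])
  then have "bij_betw (refl_bisector x y) V V"
    using endo_inj_surj[OF fin closed[OF xV yV yx[symmetric]]] by (simp add: bij_betw_def)
  then have "(\<Sum>v\<in>V. refl_bisector x y v) = (\<Sum>v\<in>V. v)"
    by (rule sum.reindex_bij_betw)
  then have "(\<Sum>v\<in>V. 2 * ((v - m) \<bullet> d) / (norm d)\<^sup>2) *\<^sub>R d = 0"
    using refl_bisector_eq[of x y] by (simp add: sum_subtractf scaleR_sum_left m_def d_def)
  then have "(\<Sum>v\<in>V. (v - m) \<bullet> d) = 0"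
    using \<open>d \<noteq> 0\<close> by (simp add: sum_divide_distrib[symmetric] sum_distrib_left[symmetric])
  moreover have "(\<Sum>v\<in>V. (v - m) \<bullet> d) = real (card V) * ((x - m) \<bullet> d)"
  proof -
    have "(\<Sum>v\<in>V. v) = real (card V) *\<^sub>R x"
      using card by (simp add: x_def centroid_def scaleR_conv_of_real)
    then show ?thesis
      by (simp add: inner_sum_left[symmetric] sum_subtractf scaleR_conv_of_real[symmetric]
          algebra_simps)
  qed
  moreover have "(x - m) \<bullet> d = - (norm d)\<^sup>2 / 2"
    by (simp add: m_def d_def power2_norm_eq_inner inner_complex_def field_simps)
  ultimately show False using card \<open>d \<noteq> 0\<close> by simp
qed

lemma V0_reflection_closed:
  assumes "symmetry_condition L N \<nu>" "x \<in> V0 L N \<nu>" "y \<in> V0 L N \<nu>" "x \<noteq> y"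
  shows "refl_bisector x y ` V0 L N \<nu> \<subseteq> V0 L N \<nu>"
proof -
  have "{ws :: nat list. length ws = 0 \<and> set ws \<subseteq> {1..N}} = {[]}" by auto
  then have "Vn L N \<nu> 0 = V0 L N \<nu>" by (simp add: Vn_def Psi_word_def)
  then show ?thesis using assms unfolding symmetry_condition_def by metis
qed

lemma barycenter_notin_VMM:
  assumes "L \<noteq> 0" "finite (V0 L N \<nu>)" "card (V0 L N \<nu>) \<ge> 2" "symmetry_condition L N \<nu>"
  shows "barycenter L N \<nu> M \<notin> VMM L N \<nu> M"
proof
  define c where "c = complex_of_real (L powi M)"
  have "c \<noteq> 0" using assms(1) by (simp add: c_def)
  have VMM: "VMM L N \<nu> M = (\<lambda>z. c * z) ` V0 L N \<nu>"
    by (simp add: VMM_def scaleL_def c_def)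
  assume "barycenter L N \<nu> M \<in> VMM L N \<nu> M"
  then have "c * centroid (V0 L N \<nu>) \<in> (\<lambda>z. c * z) ` V0 L N \<nu>"
    by (simp add: barycenter_def VMM centroid_scale[OF \<open>c \<noteq> 0\<close>] flip: centroid_def)
  then have "centroid (V0 L N \<nu>) \<in> V0 L N \<nu>" using \<open>c \<noteq> 0\<close> by auto
  moreover have "centroid (V0 L N \<nu>) \<notin> V0 L N \<nu>"
    using assms(2-4) by (intro centroid_notin_reflection_closed V0_reflection_closed)
  ultimately show False by contradiction
qed

lemma complex_vertices_iff: "v \<in> complex_vertices L N \<nu> M s \<longleftrightarrow> v - s \<in> VMM L N \<nu> M"
  by (force simp: complex_vertices_def)

lemma rotation_maps_VMM: "R \<in> rotations L N \<nu> M \<Longrightarrow> u \<in> VMM L N \<nu> M \<Longrightarrow> R u \<in> VMM L N \<nu> M"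
  by (auto simp: rotations_def)

lemma rotations_eqI:
  assumes "R \<in> rotations L N \<nu> M" "R' \<in> rotations L N \<nu> M"
    and "u \<noteq> barycenter L N \<nu> M" "R u = R' u"
  shows "R = R'"
  using assms by (auto simp: rotations_def)

lemma good_labellings_agree_on_complex:
  assumes "barycenter L N \<nu> M \<notin> VMM L N \<nu> M"
    and good: "good_labelling L N \<nu> A M lab" "good_labelling L N \<nu> A M lab'"
    and agree: "\<And>u. u \<in> VMM L N \<nu> M \<Longrightarrow> lab u = lab' u"
    and s: "s \<in> complex_shifts L N \<nu> M"
    and v0: "v0 \<in> complex_vertices L N \<nu> M s" "lab v0 = lab' v0"
    and v: "v \<in> complex_vertices L N \<nu> M s"
  shows "lab v = lab' v"
proof -
  obtain R R' where R: "R \<in> rotations L N \<nu> M" "R' \<in> rotations L N \<nu> M"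
    and lab: "\<And>w. w \<in> complex_vertices L N \<nu> M s \<Longrightarrow> lab w = lab (R (w - s))"
    and lab': "\<And>w. w \<in> complex_vertices L N \<nu> M s \<Longrightarrow> lab' w = lab' (R' (w - s))"
    using good s unfolding good_labelling_def by metis
  define u0 where "u0 = v0 - s"
  have u0: "u0 \<in> VMM L N \<nu> M" using v0(1) by (simp add: u0_def complex_vertices_iff)
  have "lab (R u0) = lab (R' u0)"
    using lab[OF v0(1)] lab'[OF v0(1)] v0(2) agree rotation_maps_VMM[OF R(2) u0]
    by (simp add: u0_def)
  moreover have "inj_on lab (VMM L N \<nu> M)"
    using good(1) by (simp add: good_labelling_def bij_betw_def)
  ultimately have "R u0 = R' u0"
    using rotation_maps_VMM[OF _ u0] R by (meson inj_onD)
  then have "R = R'"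
    using rotations_eqI[OF R] u0 assms(1) by metis
  moreover have "v - s \<in> VMM L N \<nu> M" using v by (simp add: complex_vertices_iff)
  ultimately show ?thesis
    using lab[OF v] lab'[OF v] agree rotation_maps_VMM[OF R(1)] by metis
qed

text \<open>The translation vectors of the M-complexes contained in K^<M+d>.\<close>

definition level_shifts :: "real \<Rightarrow> nat \<Rightarrow> (nat \<Rightarrow> complex) \<Rightarrow> int \<Rightarrow> nat \<Rightarrow> complex set" where
  "level_shifts L N \<nu> M d =
     {(\<Sum>j\<in>{M+1..M + int d}. of_real (L powi j) * \<nu> (ii j)) | ii.
        \<forall>j\<in>{M+1..M + int d}. ii j \<in> {1..N}}"

lemma level_shifts_0: "level_shifts L N \<nu> M 0 = {0}"
  by (simp add: level_shifts_def)

lemma level_shifts_Suc: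
  "level_shifts L N \<nu> M (Suc d) =
     {s + of_real (L powi (M + int d + 1)) * \<nu> i | s i. s \<in> level_shifts L N \<nu> M d \<and> i \<in> {1..N}}"
  (is "?lhs = ?rhs")
proof
  have ivl: "{M+1..M + int (Suc d)} = insert (M + int d + 1) {M+1..M + int d}" by auto
  show "?lhs \<subseteq> ?rhs"
  proof
    fix s assume "s \<in> ?lhs"
    then obtain ii where s: "s = (\<Sum>j\<in>{M+1..M + int (Suc d)}. of_real (L powi j) * \<nu> (ii j))"
      and ii: "\<forall>j\<in>{M+1..M + int (Suc d)}. ii j \<in> {1..N}"
      by (auto simp: level_shifts_def)
    have "s = (\<Sum>j\<in>{M+1..M + int d}. of_real (L powi j) * \<nu> (ii j))
              + of_real (L powi (M + int d + 1)) * \<nu> (ii (M + int d + 1))"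
      unfolding s ivl by (simp add: add.commute)
    moreover have "(\<Sum>j\<in>{M+1..M + int d}. of_real (L powi j) * \<nu> (ii j)) \<in> level_shifts L N \<nu> M d"
      using ii ivl by (auto simp: level_shifts_def)
    ultimately show "s \<in> ?rhs" using ii ivl by blast
  qed
  show "?rhs \<subseteq> ?lhs"
  proof
    fix s assume "s \<in> ?rhs"
    then obtain ii i where s: "s = (\<Sum>j\<in>{M+1..M + int d}. of_real (L powi j) * \<nu> (ii j))
                                  + of_real (L powi (M + int d + 1)) * \<nu> i"
      and ii: "\<forall>j\<in>{M+1..M + int d}. ii j \<in> {1..N}" and i: "i \<in> {1..N}"
      by (auto simp: level_shifts_def)
    define jj where "jj = ii(M + int d + 1 := i)"
    have "(\<Sum>j\<in>{M+1..M + int d}. of_real (L powi j) * \<nu> (jj j))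
        = (\<Sum>j\<in>{M+1..M + int d}. of_real (L powi j) * \<nu> (ii j))"
      by (rule sum.cong) (auto simp: jj_def)
    then have "s = (\<Sum>j\<in>{M+1..M + int (Suc d)}. of_real (L powi j) * \<nu> (jj j))"
      unfolding s ivl by (simp add: add.commute jj_def)
    moreover have "\<forall>j\<in>{M+1..M + int (Suc d)}. jj j \<in> {1..N}"
      using ii i unfolding ivl jj_def by auto
    ultimately show "s \<in> ?lhs" unfolding level_shifts_def by blast
  qed
qed

lemma zero_in_level_shifts:
  assumes "\<nu> 1 = 0" "N \<ge> 1"
  shows "0 \<in> level_shifts L N \<nu> M d"
proof (induction d)
  case 0
  show ?case by (simp add: level_shifts_0)
next
  case (Suc d)
  then show ?case using assms unfolding level_shifts_Suc by force
qed

lemma complex_shifts_eq_level_shifts: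
  assumes "\<nu> 1 = 0" "N \<ge> 1"
  shows "complex_shifts L N \<nu> M = (\<Union>d. level_shifts L N \<nu> M d)"
proof
  show "complex_shifts L N \<nu> M \<subseteq> (\<Union>d. level_shifts L N \<nu> M d)"
  proof
    fix s assume "s \<in> complex_shifts L N \<nu> M"
    then obtain J ii where "s = (\<Sum>j\<in>{M+1..J}. of_real (L powi j) * \<nu> (ii j))"
      and "J \<ge> M + 1" and "\<forall>j\<in>{M+1..J}. ii j \<in> {1..N}"
      by (auto simp: complex_shifts_def)
    then have "s \<in> level_shifts L N \<nu> M (nat (J - M))"
      by (auto simp: level_shifts_def)
    then show "s \<in> (\<Union>d. level_shifts L N \<nu> M d)" by blast
  qed
  have Suc: "level_shifts L N \<nu> M (Suc d) \<subseteq> complex_shifts L N \<nu> M" for d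
    by (force simp: level_shifts_def complex_shifts_def)
  moreover have "level_shifts L N \<nu> M 0 \<subseteq> level_shifts L N \<nu> M 1"
    using zero_in_level_shifts[where \<nu> = \<nu>, OF assms] by (simp add: level_shifts_0)
  ultimately have "level_shifts L N \<nu> M d \<subseteq> complex_shifts L N \<nu> M" for d
    by (cases d) auto
  then show "(\<Union>d. level_shifts L N \<nu> M d) \<subseteq> complex_shifts L N \<nu> M" by blast
qed

definition level_adjacency :: "real \<Rightarrow> nat \<Rightarrow> (nat \<Rightarrow> complex) \<Rightarrow> int \<Rightarrow> nat \<Rightarrow> complex rel" where
  "level_adjacency L N \<nu> M d =
     {(s, s'). s \<in> level_shifts L N \<nu> M d \<and> s' \<in> level_shifts L N \<nu> M d \<and>
        complex_vertices L N \<nu> M s \<inter> complex_vertices L N \<nu> M s' \<noteq> {}}"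

lemma level_adjacency_translate:
  assumes "(s, s') \<in> (level_adjacency L N \<nu> M d)\<^sup>*" and i: "i \<in> {1..N}"
  defines "t \<equiv> of_real (L powi (M + int d + 1)) * \<nu> i"
  shows "(s + t, s' + t) \<in> (level_adjacency L N \<nu> M (Suc d))\<^sup>*"
  using assms(1)
proof (induction rule: rtrancl_induct)
  case base
  show ?case by simp
next
  case (step y z)
  then obtain w where "y \<in> level_shifts L N \<nu> M d" "z \<in> level_shifts L N \<nu> M d"
    and w: "w \<in> complex_vertices L N \<nu> M y" "w \<in> complex_vertices L N \<nu> M z"
    by (auto simp: level_adjacency_def)
  moreover have "w + t \<in> complex_vertices L N \<nu> M (y + t) \<inter> complex_vertices L N \<nu> M (z + t)"
    using w by (simp add: complex_vertices_iff)
  ultimately have "(y + t, z + t) \<in> level_adjacency L N \<nu> M (Suc d)"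
    using i unfolding level_adjacency_def level_shifts_Suc t_def by blast
  with step.IH show ?case by simp
qed

lemma scaled_Psi:
  assumes "L \<noteq> 0"
  shows "of_real (L powi (n + 1)) * Psi L \<nu> i x = of_real (L powi n) * x + of_real (L powi (n + 1)) * \<nu> i"
proof -
  have "complex_of_real L powi (n + 1) = complex_of_real L powi n * complex_of_real L"
    using assms by (simp add: power_int_add_1)
  then show ?thesis
    unfolding Psi_def of_real_power_int using assms by (simp add: field_simps)
qed

lemma scaled_V0_in_level_complex:
  assumes "L \<noteq> 0" and x: "x \<in> V0 L N \<nu>"
  shows "\<exists>s\<in>level_shifts L N \<nu> M d. of_real (L powi (M + int d)) * x \<in> complex_vertices L N \<nu> M s"
proof -
  obtain k where k: "k \<in> {1..N}" "Psi L \<nu> k x = x"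
    using x by (auto simp: V0_def fixed_points_def)
  have "\<exists>s\<in>level_shifts L N \<nu> M d. of_real (L powi (M + int d)) * x = of_real (L powi M) * x + s"
  proof (induction d)
    case 0
    show ?case by (simp add: level_shifts_0)
  next
    case (Suc d)
    then obtain s where s: "s \<in> level_shifts L N \<nu> M d"
      "of_real (L powi (M + int d)) * x = of_real (L powi M) * x + s" by blast
    have "of_real (L powi (M + int d + 1)) * x
        = of_real (L powi M) * x + (s + of_real (L powi (M + int d + 1)) * \<nu> k)"
      using scaled_Psi[OF assms(1), of "M + int d" \<nu> k x] s(2) k(2) by (simp add: add.assoc)
    moreover have "s + of_real (L powi (M + int d + 1)) * \<nu> k \<in> level_shifts L N \<nu> M (Suc d)"
      using s(1) k(1) unfolding level_shifts_Suc by blast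
    moreover have "M + int (Suc d) = M + int d + 1" by simp
    ultimately show ?case by metis
  qed
  then show ?thesis using x by (force simp: complex_vertices_iff VMM_def scaleL_def)
qed

lemma level_copies_adjacent:
  fixes M :: int and d :: nat
  assumes "L \<noteq> 0" "j \<in> {1..N}" "k \<in> {1..N}"
    and "Psi L \<nu> j ` V0 L N \<nu> \<inter> Psi L \<nu> k ` V0 L N \<nu> \<noteq> {}"
  defines "T \<equiv> \<lambda>i. of_real (L powi (M + int d + 1)) * \<nu> i"
  shows "\<exists>s\<in>level_shifts L N \<nu> M d. \<exists>s'\<in>level_shifts L N \<nu> M d.
           (s + T j, s' + T k) \<in> level_adjacency L N \<nu> M (Suc d)"
proof -
  obtain x y where x: "x \<in> V0 L N \<nu>" and y: "y \<in> V0 L N \<nu>" and xy: "Psi L \<nu> j x = Psi L \<nu> k y"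
    using assms(4) by blast
  obtain s where s: "s \<in> level_shifts L N \<nu> M d"
    "of_real (L powi (M + int d)) * x \<in> complex_vertices L N \<nu> M s"
    using scaled_V0_in_level_complex[OF assms(1) x] by blast
  obtain s' where s': "s' \<in> level_shifts L N \<nu> M d"
    "of_real (L powi (M + int d)) * y \<in> complex_vertices L N \<nu> M s'"
    using scaled_V0_in_level_complex[OF assms(1) y] by blast
  define q where "q = of_real (L powi (M + int d + 1)) * Psi L \<nu> j x"
  have "q \<in> complex_vertices L N \<nu> M (s + T j)"
    using s(2) scaled_Psi[OF assms(1), of "M + int d" \<nu> j x]
    by (simp add: q_def T_def complex_vertices_iff)
  moreover have "q \<in> complex_vertices L N \<nu> M (s' + T k)"
    using s'(2) scaled_Psi[OF assms(1), of "M + int d" \<nu> k y]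
    by (simp add: q_def xy T_def complex_vertices_iff)
  moreover have "s + T j \<in> level_shifts L N \<nu> M (Suc d)" "s' + T k \<in> level_shifts L N \<nu> M (Suc d)"
    using s(1) s'(1) assms(2,3) unfolding level_shifts_Suc T_def by blast+
  ultimately show ?thesis using s(1) s'(1) unfolding level_adjacency_def by blast
qed

lemma level_shifts_connected:
  assumes "L \<noteq> 0" and conn: "connectivity_condition L N \<nu>"
  shows "s \<in> level_shifts L N \<nu> M d \<Longrightarrow> s' \<in> level_shifts L N \<nu> M d \<Longrightarrow>
    (s, s') \<in> (level_adjacency L N \<nu> M d)\<^sup>*"
proof (induction d arbitrary: s s')
  case 0
  then show ?case by (simp add: level_shifts_0)
next
  case (Suc d)
  \<comment> \<open>K^<M+d+1> is the union of the copies K^<M+d> + T i, and 1-cells adjacent in the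
    connectivity graph give touching copies\<close>
  define T where "T i = of_real (L powi (M + int d + 1)) * \<nu> i" for i
  define C where "C = {(a, b). a \<in> {1..N} \<and> b \<in> {1..N} \<and>
                   Psi L \<nu> a ` V0 L N \<nu> \<inter> Psi L \<nu> b ` V0 L N \<nu> \<noteq> {}}"
  have copies: "(s0 + T i, s0' + T k) \<in> (level_adjacency L N \<nu> M (Suc d))\<^sup>*"
    if "(i, k) \<in> C\<^sup>*" "i \<in> {1..N}" "s0 \<in> level_shifts L N \<nu> M d"
      "s0' \<in> level_shifts L N \<nu> M d" for i k s0 s0'
    using that(1,4)
  proof (induction arbitrary: s0' rule: rtrancl_induct)
    case base
    show ?case
      using level_adjacency_translate[OF Suc.IH[OF that(3) base] that(2)] by (simp add: T_def)
  next
    case (step j k)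
    then have jk: "j \<in> {1..N}" "k \<in> {1..N}"
      "Psi L \<nu> j ` V0 L N \<nu> \<inter> Psi L \<nu> k ` V0 L N \<nu> \<noteq> {}"
      by (auto simp: C_def)
    obtain sj sk where sjk: "sj \<in> level_shifts L N \<nu> M d" "sk \<in> level_shifts L N \<nu> M d"
      and edge: "(sj + T j, sk + T k) \<in> level_adjacency L N \<nu> M (Suc d)"
      using level_copies_adjacent[OF assms(1) jk] unfolding T_def by blast
    have "(s0 + T i, sj + T j) \<in> (level_adjacency L N \<nu> M (Suc d))\<^sup>*"
      using step.IH[OF sjk(1)] .
    also note edge
    also have "(sk + T k, s0' + T k) \<in> (level_adjacency L N \<nu> M (Suc d))\<^sup>*"
      using level_adjacency_translate[OF Suc.IH[OF sjk(2) step.prems] jk(2)] by (simp add: T_def)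
    finally show ?case .
  qed
  obtain s0 i where "s0 \<in> level_shifts L N \<nu> M d" "i \<in> {1..N}" "s = s0 + T i"
    using Suc.prems(1) unfolding level_shifts_Suc T_def by blast
  moreover obtain s0' k where "s0' \<in> level_shifts L N \<nu> M d" "k \<in> {1..N}" "s' = s0' + T k"
    using Suc.prems(2) unfolding level_shifts_Suc T_def by blast
  moreover have "(i, k) \<in> C\<^sup>*"
    using conn \<open>i \<in> {1..N}\<close> \<open>k \<in> {1..N}\<close> unfolding connectivity_condition_def C_def by blast
  ultimately show ?case using copies by blast
qed

lemma good_labellings_eq:
  assumes fractal: "planar_simple_nested_fractal L N \<nu> K"
    and good: "good_labelling L N \<nu> A M lab" "good_labelling L N \<nu> A M lab'"
    and agree: "\<And>u. u \<in> VMM L N \<nu> M \<Longrightarrow> lab u = lab' u"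
    and v: "v \<in> VMinf L N \<nu> M"
  shows "lab v = lab' v"
proof -
  have L: "L \<noteq> 0" and N: "N \<ge> 1" and \<nu>: "\<nu> 1 = 0"
    and conn: "connectivity_condition L N \<nu>"
    using fractal by (auto simp: planar_simple_nested_fractal_def)
  have "barycenter L N \<nu> M \<notin> VMM L N \<nu> M"
    using fractal by (intro barycenter_notin_VMM) (auto simp: planar_simple_nested_fractal_def
        intro: card_ge_0_finite)
  note agree_on_complex = good_labellings_agree_on_complex[OF this good agree]
  have shifts: "complex_shifts L N \<nu> M = (\<Union>d. level_shifts L N \<nu> M d)"
    using complex_shifts_eq_level_shifts[where \<nu> = \<nu>, OF \<nu> N] .
  obtain s d where s: "s \<in> level_shifts L N \<nu> M d" and vs: "v \<in> complex_vertices L N \<nu> M s"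
    using v unfolding VMinf_def shifts by blast
  have "(0, s) \<in> (level_adjacency L N \<nu> M d)\<^sup>*"
    using level_shifts_connected[OF L conn zero_in_level_shifts[where \<nu> = \<nu>, OF \<nu> N] s] .
  then have "\<forall>w\<in>complex_vertices L N \<nu> M s. lab w = lab' w"
  proof (induction rule: rtrancl_induct)
    case base
    show ?case using agree by (simp add: complex_vertices_iff)
  next
    case (step y z)
    then obtain w where "z \<in> level_shifts L N \<nu> M d"
      and "w \<in> complex_vertices L N \<nu> M y" "w \<in> complex_vertices L N \<nu> M z"
      by (auto simp: level_adjacency_def)
    with step.IH show ?case using shifts by (blast intro: agree_on_complex)
  qed
  then show ?thesis using vs by blast
qed

lemma complex_shifts_scale:
  assumes "L \<noteq> 0" "s \<in> complex_shifts L N \<nu> M"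
  shows "of_real (L powi (M' - M)) * s \<in> complex_shifts L N \<nu> M'"
proof -
  obtain J ii where s: "s = (\<Sum>j\<in>{M+1..J}. of_real (L powi j) * \<nu> (ii j))"
    and J: "J \<ge> M + 1" and ii: "\<forall>j\<in>{M+1..J}. ii j \<in> {1..N}"
    using assms(2) by (auto simp: complex_shifts_def)
  define c where "c = M' - M"
  have "of_real (L powi c) * s = (\<Sum>j\<in>{M+1..J}. of_real (L powi (j + c)) * \<nu> (ii j))"
    unfolding s using assms(1) by (simp add: sum_distrib_left power_int_add mult_ac)
  also have "\<dots> = (\<Sum>j\<in>{M'+1..J+c}. of_real (L powi j) * \<nu> (ii (j - c)))"
    by (rule sum.reindex_bij_witness[of _ "\<lambda>j. j - c" "\<lambda>j. j + c"]) (auto simp: c_def)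
  finally show ?thesis
    using J ii unfolding complex_shifts_def c_def by force
qed

lemma VMM_scale:
  assumes "L \<noteq> 0"
  shows "VMM L N \<nu> M' = (\<lambda>z. of_real (L powi (M' - M)) * z) ` VMM L N \<nu> M"
proof -
  have "L powi M' = L powi (M' - M) * L powi M"
    using assms by (simp flip: power_int_add)
  then show ?thesis by (simp add: VMM_def scaleL_def image_image mult.assoc)
qed

lemma VMinf_scale:
  assumes "L \<noteq> 0" "v \<in> VMinf L N \<nu> M"
  shows "of_real (L powi (M' - M)) * v \<in> VMinf L N \<nu> M'"
proof -
  define \<mu> where "\<mu> = complex_of_real (L powi (M' - M))"
  obtain s where s: "s \<in> complex_shifts L N \<nu> M" and "v - s \<in> VMM L N \<nu> M"
    using assms(2) by (auto simp: VMinf_def complex_vertices_iff)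
  then have "\<mu> * v - \<mu> * s \<in> VMM L N \<nu> M'"
    using VMM_scale[OF assms(1), of N \<nu> M' M] by (auto simp: \<mu>_def right_diff_distrib[symmetric])
  moreover have "\<mu> * s \<in> complex_shifts L N \<nu> M'"
    using complex_shifts_scale[OF assms(1) s] by (simp add: \<mu>_def)
  ultimately show ?thesis by (auto simp: VMinf_def complex_vertices_iff \<mu>_def)
qed

lemma rotations_scale:
  assumes "L \<noteq> 0" "R' \<in> rotations L N \<nu> M'"
  obtains R where "R \<in> rotations L N \<nu> M"
    "\<And>z. R' (of_real (L powi (M' - M)) * z) = of_real (L powi (M' - M)) * R z"
proof -
  define \<mu> where "\<mu> = complex_of_real (L powi (M' - M))"
  have "\<mu> \<noteq> 0" using assms(1) by (simp add: \<mu>_def)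
  have VMM: "VMM L N \<nu> M' = (\<lambda>z. \<mu> * z) ` VMM L N \<nu> M"
    using VMM_scale[OF assms(1)] by (simp add: \<mu>_def)
  have bary: "barycenter L N \<nu> M' = \<mu> * barycenter L N \<nu> M"
    using centroid_scale[OF \<open>\<mu> \<noteq> 0\<close>] by (simp add: barycenter_def VMM flip: centroid_def)
  obtain a where a: "norm a = 1"
    and R': "R' = (\<lambda>z. barycenter L N \<nu> M' + a * (z - barycenter L N \<nu> M'))"
    and R'V: "R' ` VMM L N \<nu> M' = VMM L N \<nu> M'"
    using assms(2) by (auto simp: rotations_def)
  define R where "R = (\<lambda>z. barycenter L N \<nu> M + a * (z - barycenter L N \<nu> M))"
  have comm: "R' (\<mu> * z) = \<mu> * R z" for z
    by (simp add: R' R_def bary algebra_simps)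
  have "(\<lambda>z. \<mu> * z) ` R ` VMM L N \<nu> M = (\<lambda>z. \<mu> * z) ` VMM L N \<nu> M"
    using R'V by (simp add: VMM image_image flip: comm)
  then have "R ` VMM L N \<nu> M = VMM L N \<nu> M"
    using \<open>\<mu> \<noteq> 0\<close> by (simp add: inj_image_eq_iff inj_on_def)
  then have "R \<in> rotations L N \<nu> M"
    using a by (auto simp: rotations_def R_def)
  with comm show ?thesis using that by (simp add: \<mu>_def)
qed

lemma good_labelling_rescale:
  assumes "L \<noteq> 0" and good: "good_labelling L N \<nu> A M' lab"
  shows "good_labelling L N \<nu> A M (\<lambda>z. lab (of_real (L powi (M' - M)) * z))"
proof -
  define \<mu> where "\<mu> = complex_of_real (L powi (M' - M))"
  have "\<mu> \<noteq> 0" using assms(1) by (simp add: \<mu>_def)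
  have "bij_betw (\<lambda>z. \<mu> * z) (VMM L N \<nu> M) (VMM L N \<nu> M')"
    using VMM_scale[OF assms(1)] \<open>\<mu> \<noteq> 0\<close> by (auto simp: bij_betw_def inj_on_def \<mu>_def)
  then have bij: "bij_betw (\<lambda>z. lab (\<mu> * z)) (VMM L N \<nu> M) A"
    using good bij_betw_trans unfolding good_labelling_def comp_def by blast
  have "lab (\<mu> * z) \<in> A" if "z \<in> VMinf L N \<nu> M" for z
    using good VMinf_scale[OF assms(1) that] by (auto simp: good_labelling_def \<mu>_def)
  moreover have "\<exists>R\<in>rotations L N \<nu> M. \<forall>v\<in>complex_vertices L N \<nu> M s.
                    lab (\<mu> * v) = lab (\<mu> * R (v - s))"
    if s: "s \<in> complex_shifts L N \<nu> M" for s
  proof -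
    have "\<mu> * s \<in> complex_shifts L N \<nu> M'"
      using complex_shifts_scale[OF assms(1) s] by (simp add: \<mu>_def)
    then obtain R' where R': "R' \<in> rotations L N \<nu> M'"
      and lab: "\<And>w. w \<in> complex_vertices L N \<nu> M' (\<mu> * s) \<Longrightarrow> lab w = lab (R' (w - \<mu> * s))"
      using good unfolding good_labelling_def by blast
    obtain R where R: "R \<in> rotations L N \<nu> M" and comm: "\<And>z. R' (\<mu> * z) = \<mu> * R z"
      using rotations_scale[OF assms(1) R'] unfolding \<mu>_def by blast
    have "lab (\<mu> * v) = lab (\<mu> * R (v - s))" if "v \<in> complex_vertices L N \<nu> M s" for v
    proof -
      have "\<mu> * v \<in> complex_vertices L N \<nu> M' (\<mu> * s)"
        using that VMM_scale[OF assms(1), of N \<nu> M' M]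
        by (auto simp: complex_vertices_iff \<mu>_def right_diff_distrib[symmetric])
      then show ?thesis
        using lab comm by (simp add: right_diff_distrib[symmetric])
    qed
    with R show ?thesis by blast
  qed
  ultimately show ?thesis
    using bij by (auto simp: good_labelling_def \<mu>_def)
qed

lemma good_labelling_relabel:
  assumes good: "good_labelling L N \<nu> A M lab" and \<sigma>: "bij_betw \<sigma> A A"
  shows "good_labelling L N \<nu> A M (\<lambda>z. \<sigma> (lab z))"
proof -
  have "bij_betw (\<sigma> \<circ> lab) (VMM L N \<nu> M) A"
    using good \<sigma> by (auto simp: good_labelling_def intro: bij_betw_trans)
  moreover have "\<sigma> ` A \<subseteq> A" using \<sigma> by (simp add: bij_betw_def)
  moreover have "\<forall>s\<in>complex_shifts L N \<nu> M. \<exists>R\<in>rotations L N \<nu> M.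
      \<forall>v\<in>complex_vertices L N \<nu> M s. \<sigma> (lab v) = \<sigma> (lab (R (v - s)))"
    using good unfolding good_labelling_def by metis
  ultimately show ?thesis
    using good unfolding good_labelling_def comp_def by (auto simp: image_subset_iff)
qed

lemma bij_betw_factor:
  assumes "bij_betw f X A" "bij_betw g X B"
  obtains \<sigma> where "bij_betw \<sigma> A B" "\<And>x. x \<in> X \<Longrightarrow> \<sigma> (f x) = g x"
proof
  show "bij_betw (g \<circ> inv_into X f) A B"
    using assms by (blast intro: bij_betw_trans bij_betw_inv_into)
  show "(g \<circ> inv_into X f) (f x) = g x" if "x \<in> X" for x
    using assms(1) that by (simp add: bij_betw_inv_into_left)
qed

lemma good_labelling_exists:
  assumes "L \<noteq> 0" "good_labelling_property L N \<nu> A"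
  obtains lab where "good_labelling L N \<nu> A M lab"
  using assms good_labelling_rescale unfolding good_labelling_property_def by blast

lemma good_labellings_eq_up_to_relabelling:
  assumes fractal: "planar_simple_nested_fractal L N \<nu> K"
    and good: "good_labelling L N \<nu> A M lab" "good_labelling L N \<nu> A M lab'"
  obtains \<sigma> where "bij_betw \<sigma> A A" "\<And>v. v \<in> VMinf L N \<nu> M \<Longrightarrow> lab v = \<sigma> (lab' v)"
proof -
  have bij: "bij_betw lab' (VMM L N \<nu> M) A" "bij_betw lab (VMM L N \<nu> M) A"
    using good by (simp_all add: good_labelling_def)
  obtain \<sigma> where \<sigma>: "bij_betw \<sigma> A A" "\<And>u. u \<in> VMM L N \<nu> M \<Longrightarrow> \<sigma> (lab' u) = lab u"
    using bij_betw_factor[OF bij] by blast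
  have "lab v = \<sigma> (lab' v)" if "v \<in> VMinf L N \<nu> M" for v
  proof (rule good_labellings_eq[OF fractal good(1) good_labelling_relabel[OF good(2) \<sigma>(1)] _ that])
    show "lab u = \<sigma> (lab' u)" if "u \<in> VMM L N \<nu> M" for u
      using \<sigma>(2)[OF that] by simp
  qed
  with \<sigma>(1) show thesis by (rule that)
qed

lemma good_labelling_extend:
  assumes "L \<noteq> 0" "good_labelling_property L N \<nu> A" "bij_betw lt (VMM L N \<nu> M) A"
  obtains lab where "good_labelling L N \<nu> A M lab" "\<And>u. u \<in> VMM L N \<nu> M \<Longrightarrow> lab u = lt u"
proof -
  obtain lab0 where good: "good_labelling L N \<nu> A M lab0"
    using good_labelling_exists[OF assms(1,2)] .
  then have "bij_betw lab0 (VMM L N \<nu> M) A" by (simp add: good_labelling_def)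
  then obtain \<sigma> where \<sigma>: "bij_betw \<sigma> A A" "\<And>u. u \<in> VMM L N \<nu> M \<Longrightarrow> \<sigma> (lab0 u) = lt u"
    using bij_betw_factor assms(3) by blast
  show thesis by (rule that[OF good_labelling_relabel[OF good \<sigma>(1)] \<sigma>(2)])
qed

theorem proposition3p5:
  fixes L :: real and N :: nat and \<nu> :: "nat \<Rightarrow> complex" and K :: "complex set"
    and A :: "'a set"
  assumes fractal: "planar_simple_nested_fractal L N \<nu> K"
    and alphabet: "finite A" "card A = card (V0 L N \<nu>)"
    and glp: "good_labelling_property L N \<nu> A"
  shows "\<forall>M::int.
     (\<forall>lab lab'. good_labelling L N \<nu> A M lab \<and> good_labelling L N \<nu> A M lab' \<longrightarrow>
        (\<exists>\<sigma>. bij_betw \<sigma> A A \<and> (\<forall>v\<in>VMinf L N \<nu> M. lab v = \<sigma> (lab' v)))) \<and>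
     (\<forall>lt. bij_betw lt (VMM L N \<nu> M) A \<longrightarrow>
        (\<exists>lab. good_labelling L N \<nu> A M lab \<and> (\<forall>v\<in>VMM L N \<nu> M. lab v = lt v) \<and>
             (\<forall>lab'. good_labelling L N \<nu> A M lab' \<and> (\<forall>v\<in>VMM L N \<nu> M. lab' v = lt v) \<longrightarrow>
                    (\<forall>v\<in>VMinf L N \<nu> M. lab' v = lab v))))"
proof (intro allI conjI impI)
  fix M :: int and lab lab'
  assume "good_labelling L N \<nu> A M lab \<and> good_labelling L N \<nu> A M lab'"
  then obtain \<sigma> where "bij_betw \<sigma> A A" "\<And>v. v \<in> VMinf L N \<nu> M \<Longrightarrow> lab v = \<sigma> (lab' v)"
    using good_labellings_eq_up_to_relabelling[OF fractal] by blast
  then show "\<exists>\<sigma>. bij_betw \<sigma> A A \<and> (\<forall>v\<in>VMinf L N \<nu> M. lab v = \<sigma> (lab' v))" by blast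
next
  fix M :: int and lt
  assume lt: "bij_betw lt (VMM L N \<nu> M) A"
  have "L \<noteq> 0" using fractal by (simp add: planar_simple_nested_fractal_def)
  then obtain lab where lab: "good_labelling L N \<nu> A M lab" "\<And>u. u \<in> VMM L N \<nu> M \<Longrightarrow> lab u = lt u"
    using good_labelling_extend glp lt by blast
  have "lab' v = lab v"
    if "good_labelling L N \<nu> A M lab' \<and> (\<forall>u\<in>VMM L N \<nu> M. lab' u = lt u)" "v \<in> VMinf L N \<nu> M"
    for lab' v
    using that lab by (auto intro: good_labellings_eq[OF fractal])
  with lab show "\<exists>lab. good_labelling L N \<nu> A M lab \<and> (\<forall>v\<in>VMM L N \<nu> M. lab v = lt v) \<and>
      (\<forall>lab'. good_labelling L N \<nu> A M lab' \<and> (\<forall>v\<in>VMM L N \<nu> M. lab' v = lt v) \<longrightarrow>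
         (\<forall>v\<in>VMinf L N \<nu> M. lab' v = lab v))"
    by blast
qed

end
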